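(* Let $t$ be a positive integer, let $v$ be a positive integer, let $a_1$ be an invertible element of $\mathbb{Z}_v$ and let $d$ be a divisor of $v$ such that $v\ge d\,t(2t+1)$. Let $W=\{0,a_1,2a_1,\dots,ta_1\}\subseteq\mathbb{Z}_v$ be the set of vertices of the walk $(0,a_1,2a_1,\dots,ta_1)$. Then either $W\cap\{1,2,\dots,dt\}=\emptyset$ or $W\cap\{-1,-2,\dots,-dt\}=\emptyset$ (as subsets of $\mathbb{Z}_v$). *)

theory Defs
  imports Main
begin

end

theory Submission
  imports Defs
begin

text \<open>If \<open>k a \<equiv> i\<close> and \<open>k' a \<equiv> -j (mod v)\<close>, eliminating \<open>a\<close> gives
  \<open>k j + k' i \<equiv> 0 (mod v)\<close>. For \<open>k, k' \<le> t\<close> and \<open>1 \<le> i, j \<le> d t\<close> this number is positive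
  (if \<open>k = 0\<close>, then already \<open>i \<equiv> 0\<close> with \<open>0 < i < v\<close>) and at most \<open>2 t (d t) < v\<close>, which is absurd.\<close>

lemma dvd_cross_combination:
  fixes v a x y k l :: "'a::comm_ring_1"
  assumes "v dvd k * a - x" and "v dvd l * a + y"
  shows "v dvd k * y + l * x"
proof -
  have "k * y + l * x = k * (l * a + y) - l * (k * a - x)"
    by (simp add: algebra_simps)
  then show ?thesis
    using assms by (simp add: dvd_diff)
qed

lemma multiples_not_near_both_signs:
  fixes t m v k l i j :: nat and a :: int
  assumes "t > 0" and "2 * t * m < v"
    and "k \<le> t" and "1 \<le> i" and "i \<le> m" and "(int k * a) mod int v = int i mod int v"
    and "l \<le> t" and "1 \<le> j" and "j \<le> m" and "(int l * a) mod int v = (- int j) mod int v"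
  shows False
proof -
  have i_dvd: "int v dvd int k * a - int i" and j_dvd: "int v dvd int l * a + int j"
    using assms(6,10) by (simp_all add: mod_eq_dvd_iff)
  have "k > 0"
  proof (rule ccontr)
    assume "\<not> k > 0"
    then have "v dvd i"
      using i_dvd by simp
    moreover have "i < v"
      using assms(1,2,5) by (cases t) auto
    ultimately show False
      using \<open>1 \<le> i\<close> by (simp add: nat_dvd_not_less)
  qed
  have "int v dvd int (k * j + l * i)"
    using dvd_cross_combination[OF i_dvd j_dvd] by simp
  then have "v dvd k * j + l * i"
    by (simp only: of_nat_dvd_iff)
  moreover have "k * j + l * i > 0"
    using \<open>k > 0\<close> \<open>1 \<le> j\<close> by simp
  moreover have "k * j + l * i \<le> t * m + t * m"
    using assms(3-5,7-9) by (intro add_mono mult_le_mono) auto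
  ultimately show False
    using assms(2) nat_dvd_not_less by fastforce
qed

theorem lemma3p1:
  fixes t v d :: nat and a1 :: int
  assumes "t > 0" and "v > 0" and "coprime a1 (int v)" and "d dvd v"
    and "v \<ge> d * t * (2 * t + 1)"
  defines "W \<equiv> {(int k * a1) mod int v | k. k \<le> t}"
  shows "W \<inter> {int i mod int v | i. 1 \<le> i \<and> i \<le> d * t} = {}
       \<or> W \<inter> {(- int i) mod int v | i. 1 \<le> i \<and> i \<le> d * t} = {}"
proof (rule ccontr)
  assume "\<not> ?thesis"
  then obtain k i l j where "k \<le> t" "1 \<le> i" "i \<le> d * t"
    "(int k * a1) mod int v = int i mod int v"
    and "l \<le> t" "1 \<le> j" "j \<le> d * t"
    "(int l * a1) mod int v = (- int j) mod int v"
    unfolding W_def by blast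
  moreover have "2 * t * (d * t) < v"
  proof -
    have "d > 0"
      using \<open>1 \<le> i\<close> \<open>i \<le> d * t\<close> by (cases d) auto
    then have "2 * t * (d * t) < d * t * (2 * t + 1)"
      using \<open>t > 0\<close> by (simp add: algebra_simps)
    then show ?thesis
      using assms(5) by linarith
  qed
  ultimately show False
    using \<open>t > 0\<close> multiples_not_near_both_signs by blast
qed

end
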